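(* Let $n\ge1$, $q\in\mathbb{C}^\times$, $\beta=-q-q^{-1}$, $0\le d\le n$ with $d\equiv n \bmod 2$, and $z\in\mathbb{C}^\times$. Then, as modules over the periodic Temperley--Lieb algebra $\mathsf{pTL}_n(\beta)$, the standard modules $\mathsf{W}_{n,d,z}$ and $\mathsf{W}_{n,d,-z}$ are isomorphic.
   Context: $\mathsf{pTL}_n(\beta)$ is the unital algebra of connectivities generated by $e_0,\dots,e_{n-1}$, where connectivities are diagrams on a cylinder (rectangle with left and right edges identified) with $n$ top and $n$ bottom nodes connected pairwise by non-intersecting curves; $e_j$ ($1\le j\le n-1$) joins top nodes $j,j+1$ and bottom nodes $j,j+1$ with all other strands vertical, and $e_0$ does the same for nodes $n,1$ across the periodic boundary; products stack the second factor on top of the first. A link state with $n$ nodes and $d$ defects is a diagram drawn above a horizontal segment with $n$ nodes, with periodic boundary condition, in which $(n-d)/2$ non-intersecting arcs join nodes pairwise (possibly crossing the periodic boundary) and the remaining $d$ nodes carry defects, vertical lines extending upward to infinity that cannot be overarched; $\mathsf{B}_{n,d}$ is the set of such link states, $|\mathsf{B}_{n,d}|=\binom{n}{(n-d)/2}$. The standard module $\mathsf{W}_{n,d,z}$ is the vector space with basis $\mathsf{B}_{n,d}$, on which a connectivity $c$ acts on $w$ by drawing $w$ above $c$: the result is $0$ if two defects get joined; otherwise it is the link state read off at the bottom, multiplied by $\beta$ for each contractible loop, by $\alpha=z+z^{-1}$ for each non-contractible loop (possible only when $d=0$), and, for $d>0$, by $z$ (resp. $z^{-1}$) for each time a defect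 crosses the periodic boundary moving leftwards (resp. rightwards) as it goes down. *)

theory Defs
  imports Complex_Main
begin

text \<open>
Nodes are numbered 0,...,n-1 (node i here is node i+1 of the paper).  For a node i < n,
w i = None means that i carries a defect, and w i = Some k means that an arc joins node i to the
node (i + k) mod n, where the arc, lifted to the universal cover of the cylinder (the integer line,
node i having the lifts i + m n), joins i to i + k; so k > 0 means the arc leaves i to the right,
k < 0 to the left, and the arc crosses the periodic boundary iff i + k is not in [0,n).
\<close>

type_synonym linkstate = "nat \<Rightarrow> int option"

definition node :: "nat \<Rightarrow> int \<Rightarrow> nat" where
  "node n x = nat (x mod int n)"

definition lifted_arcs :: "nat \<Rightarrow> linkstate \<Rightarrow> (int \<times> int) set" where
  "lifted_arcs n w = {(x, x + k) | x k. 0 < k \<and> w (node n x) = Some k}"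

definition is_link_state :: "nat \<Rightarrow> nat \<Rightarrow> linkstate \<Rightarrow> bool" where
  "is_link_state n d w \<longleftrightarrow>
     (\<forall>i. n \<le> i \<longrightarrow> w i = None) \<and>
     card {i. i < n \<and> w i = None} = d \<and>
     (\<forall>i k. i < n \<and> w i = Some k \<longrightarrow>
        k \<noteq> 0 \<and> \<bar>k\<bar> < int n \<and> w (node n (int i + k)) = Some (- k)) \<and>
     (\<forall>x1 y1 x2 y2. (x1, y1) \<in> lifted_arcs n w \<and> (x2, y2) \<in> lifted_arcs n w \<longrightarrow>
        \<not> (x1 < x2 \<and> x2 < y1 \<and> y1 < y2)) \<and>
     (\<forall>x y p. (x, y) \<in> lifted_arcs n w \<and> x < p \<and> p < y \<longrightarrow> w (node n p) \<noteq> None)"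

definition LS :: "nat \<Rightarrow> nat \<Rightarrow> linkstate set" where
  "LS n d = {w. is_link_state n d w}"

text \<open>
Action of the generator e_j (j < n) on a link state w in W_{n,d,z}: result is
(scalar, link state); scalar 0 means the result is the zero vector.  e_j joins the
nodes a = (j - 1) mod n and b = j (for j = 0: a = n-1, b = 0 across the boundary);
in lifted coordinates b sits at a + 1.  Defect twists: a defect whose lifted path,
traversed downwards, starts at node x in [0,n) and ends at the lifted position y picks up
z^(-(y div n)) (z per leftward and z^-1 per rightward crossing of the boundary).
\<close>
definition gen_act :: "nat \<Rightarrow> complex \<Rightarrow> complex \<Rightarrow> nat \<Rightarrow> linkstate \<Rightarrow> complex \<times> linkstate" where
  "gen_act n beta z j w =
    (let a = (j + n - 1) mod n; b = j mod n in
     (case (w a, w b) of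
        (None, None) \<Rightarrow> (0, w)
      | (None, Some kb) \<Rightarrow>
          (let c = node n (int b + kb); y = int a + 1 + kb in
           (z powi (- (y div int n)), w(a := Some 1, b := Some (-1), c := None)))
      | (Some ka, None) \<Rightarrow>
          (let c = node n (int a + ka); y = int b - 1 + ka in
           (z powi (- (y div int n)), w(a := Some 1, b := Some (-1), c := None)))
      | (Some ka, Some kb) \<Rightarrow>
          (if node n (int a + ka) = b then
             ((if ka = 1 then beta else z + inverse z), w(a := Some 1, b := Some (-1)))
           else
             (let c = node n (int a + ka); e = node n (int a + 1 + kb); m = 1 + kb - ka in
              (1, w(a := Some 1, b := Some (-1), c := Some m, e := Some (- m)))))))"

definition std_module :: "nat \<Rightarrow> nat \<Rightarrow> (linkstate \<Rightarrow> complex) set" where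
  "std_module n d = {v. \<forall>w. w \<notin> LS n d \<longrightarrow> v w = 0}"

definition std_act :: "nat \<Rightarrow> nat \<Rightarrow> complex \<Rightarrow> complex \<Rightarrow> nat \<Rightarrow>
    (linkstate \<Rightarrow> complex) \<Rightarrow> (linkstate \<Rightarrow> complex)" where
  "std_act n d beta z j v =
     (\<lambda>w'. \<Sum>w\<in>LS n d. if snd (gen_act n beta z j w) = w'
                        then fst (gen_act n beta z j w) * v w else 0)"

text \<open>
Isomorphism of pTL_n(beta)-modules W_{n,d,z} and W_{n,d,z'}: a linear bijection commuting
with the action of the generators e_0, ..., e_{n-1} (which generate the unital algebra).
\<close>
definition std_modules_iso :: "nat \<Rightarrow> nat \<Rightarrow> complex \<Rightarrow> complex \<Rightarrow> complex \<Rightarrow> bool" where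
  "std_modules_iso n d beta z z' \<longleftrightarrow>
     (\<exists>\<phi>. bij_betw \<phi> (std_module n d) (std_module n d) \<and>
          (\<forall>u\<in>std_module n d. \<forall>v\<in>std_module n d. \<forall>s t.
              \<phi> (\<lambda>w. s * u w + t * v w) = (\<lambda>w. s * \<phi> u w + t * \<phi> v w)) \<and>
          (\<forall>j<n. \<forall>v\<in>std_module n d.
              \<phi> (std_act n d beta z j v) = std_act n d beta z' j (\<phi> v)))"

end

theory Submission
  imports Defs
begin

text \<open>
The isomorphism multiplies each link state by (-1)^N, where N is the number of its arcs crossing
the periodic boundary.  When e_j acts, the only weights depending on z are z^t for a defect that
crosses the boundary t times and z + z^-1 for a non-contractible loop; replacing z by -z multiplies
them by (-1)^t and -1.  In the first case N changes by t modulo 2, in the second by exactly one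
(the loop consists of the arc of e_j and an arc running once around the cylinder), and when e_j
re-joins two arcs N changes by an even number, because modulo 2 the crossings of the new arcs add
up to those of the old ones.
\<close>

text \<open>An arc is counted at its left end (k > 0), where (i + k) div n is 1 iff it crosses the boundary.\<close>
definition arc_crossing :: "nat \<Rightarrow> nat \<Rightarrow> int option \<Rightarrow> int" where
  "arc_crossing n i x = (case x of None \<Rightarrow> 0 | Some k \<Rightarrow> if 0 < k then (int i + k) div int n else 0)"

definition boundary_crossings :: "nat \<Rightarrow> linkstate \<Rightarrow> int" where
  "boundary_crossings n w = (\<Sum>i<n. arc_crossing n i (w i))"

definition crossing_sign :: "nat \<Rightarrow> linkstate \<Rightarrow> complex" where
  "crossing_sign n w = (if even (boundary_crossings n w) then 1 else -1)"

lemma node_less: "0 < n \<Longrightarrow> node n x < n"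
  unfolding node_def by (simp add: nat_less_iff)

lemma int_node: "0 < n \<Longrightarrow> int (node n x) = x mod int n"
  unfolding node_def by simp

lemma node_add_neq:
  assumes "i < n" "k \<noteq> 0" "\<bar>k\<bar> < int n"
  shows "node n (int i + k) \<noteq> i"
proof
  assume "node n (int i + k) = i"
  then have "(int i + k) mod int n = int i mod int n"
    using int_node[of n "int i + k"] assms(1) by simp
  then have "(int i + k - int i) mod int n = (int i - int i) mod int n"
    by (rule mod_diff_cong) simp
  then have "int n dvd k"
    by (simp add: mod_eq_0_iff_dvd)
  then have "\<bar>int n\<bar> \<le> \<bar>k\<bar>"
    using assms(2) dvd_imp_le_int by blast
  then show False
    using assms(3) by simp
qed

lemma div_add_eq_div_plus_mod_add_div:
  "0 < (n::int) \<Longrightarrow> (x + k) div n = x div n + (x mod n + k) div n"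
proof -
  assume "0 < n"
  have "x + k = (x mod n + k) + x div n * n"
    by simp
  then show ?thesis
    using div_mult_self1[of n "x mod n + k" "x div n"] \<open>0 < n\<close> by simp
qed

lemma arc_crossing_None [simp]: "arc_crossing n i None = 0"
  by (simp add: arc_crossing_def)

lemma arc_crossing_nonpos: "k \<le> 0 \<Longrightarrow> arc_crossing n i (Some k) = 0"
  by (simp add: arc_crossing_def)

lemma arc_crossing_pos: "0 < k \<Longrightarrow> arc_crossing n i (Some k) = (int i + k) div int n"
  by (simp add: arc_crossing_def)

lemma even_arc_crossing_pair:
  assumes "i < n"
  shows "even (arc_crossing n i (Some k) + arc_crossing n (node n (int i + k)) (Some (- k))
               - (int i + k) div int n)"
proof -
  consider "0 < k" | "k = 0" | "k < 0" by linarith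
  then show ?thesis
  proof cases
    case 3
    have "((int i + k) mod int n - k) div int n = - ((int i + k) div int n)"
      using div_add_eq_div_plus_mod_add_div[of "int n" "int i + k" "- k"] assms by simp
    then show ?thesis
      using 3 assms by (simp add: arc_crossing_nonpos arc_crossing_pos int_node)
  qed (use assms in \<open>simp_all add: arc_crossing_nonpos arc_crossing_pos\<close>)
qed

lemma boundary_crossings_fun_upd:
  assumes "p < n"
  shows "boundary_crossings n (w(p := x))
         = boundary_crossings n w - arc_crossing n p (w p) + arc_crossing n p x"
proof -
  have "boundary_crossings n (w(p := x)) = arc_crossing n p x + (\<Sum>i\<in>{..<n} - {p}. arc_crossing n i (w i))"
    unfolding boundary_crossings_def using assms by (simp add: sum.remove[of _ p])
  moreover have "boundary_crossings n w = arc_crossing n p (w p) + (\<Sum>i\<in>{..<n} - {p}. arc_crossing n i (w i))"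
    unfolding boundary_crossings_def using assms by (simp add: sum.remove[of _ p])
  ultimately show ?thesis by simp
qed

lemma crossing_sign_transfer:
  assumes "even (boundary_crossings n w' - boundary_crossings n w + t)"
  shows "(if even t then X else - X) * crossing_sign n w = crossing_sign n w' * X"
  using assms by (auto simp: crossing_sign_def)

lemma crossing_sign_even_change:
  "even (boundary_crossings n w' - boundary_crossings n w) \<Longrightarrow> crossing_sign n w' = crossing_sign n w"
  by (auto simp: crossing_sign_def)

lemma crossing_sign_odd_change:
  "odd (boundary_crossings n w' - boundary_crossings n w) \<Longrightarrow> crossing_sign n w' = - crossing_sign n w"
  by (auto simp: crossing_sign_def)

lemma crossing_sign_square: "crossing_sign n w * crossing_sign n w = 1"
  by (simp add: crossing_sign_def)

lemma is_link_state_paired: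
  assumes "is_link_state n d w" "i < n" "w i = Some k"
  shows "k \<noteq> 0 \<and> \<bar>k\<bar> < int n \<and> w (node n (int i + k)) = Some (- k)"
  using assms unfolding is_link_state_def by blast

context
  fixes n :: nat and w :: linkstate and j a :: nat
  assumes paired: "\<And>i k. i < n \<Longrightarrow> w i = Some k \<Longrightarrow>
      k \<noteq> 0 \<and> \<bar>k\<bar> < int n \<and> w (node n (int i + k)) = Some (- k)"
    and site: "j < n"
    and left_def: "a = (j + n - 1) mod n"
begin

lemma gen_act_at_site:
  "gen_act n beta z j w =
     (case (w a, w j) of
        (None, None) \<Rightarrow> (0, w)
      | (None, Some kb) \<Rightarrow>
          (let c = node n (int j + kb); y = int a + 1 + kb in
           (z powi (- (y div int n)), w(a := Some 1, j := Some (-1), c := None)))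
      | (Some ka, None) \<Rightarrow>
          (let c = node n (int a + ka); y = int j - 1 + ka in
           (z powi (- (y div int n)), w(a := Some 1, j := Some (-1), c := None)))
      | (Some ka, Some kb) \<Rightarrow>
          (if node n (int a + ka) = j then
             ((if ka = 1 then beta else z + inverse z), w(a := Some 1, j := Some (-1)))
           else
             (let c = node n (int a + ka); e = node n (int a + 1 + kb); m = 1 + kb - ka in
              (1, w(a := Some 1, j := Some (-1), c := Some m, e := Some (- m))))))"
  unfolding gen_act_def Let_def by (simp only: mod_less[OF site] left_def[symmetric])

lemma left_less: "a < n"
  using site left_def by simp

lemma left_succ: "int a + 1 = int j + (if j = 0 then int n else 0)"
  using site left_def by (auto simp: mod_if)

lemma arc_crossing_left_unit: "arc_crossing n a (Some 1) = (if j = 0 then 1 else 0)"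
  using left_succ site by (auto simp: arc_crossing_pos)

lemma node_left_succ_add: "node n (int a + 1 + k) = node n (int j + k)"
proof -
  have "int a + 1 + k = (int j + k) + (if j = 0 then 1 else 0) * int n"
    using left_succ by simp
  then show ?thesis
    unfolding node_def by simp
qed

lemma left_neq_site:
  assumes "i < n" "w i = Some k"
  shows "a \<noteq> j"
  using paired[OF assms] left_succ by (cases "j = 0") auto

lemma defect_right_parity:
  assumes wa: "w a = None" and wj: "w j = Some kb"
  shows "even (boundary_crossings n (w(a := Some 1, j := Some (-1), node n (int j + kb) := None))
               - boundary_crossings n w + - ((int a + 1 + kb) div int n))"
proof -
  define c where "c = node n (int j + kb)"
  have wc: "w c = Some (- kb)" and kb: "kb \<noteq> 0" "\<bar>kb\<bar> < int n"
    using paired[OF site wj] unfolding c_def by auto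
  have "c < n" "a \<noteq> j" "c \<noteq> a" "c \<noteq> j"
    using node_less[of n] site left_neq_site[OF site wj] wa wc node_add_neq[OF site kb]
    unfolding c_def by auto
  then have "boundary_crossings n (w(a := Some 1, j := Some (-1), c := None)) - boundary_crossings n w
      = arc_crossing n a (Some 1) - (arc_crossing n j (Some kb) + arc_crossing n c (Some (- kb)))"
    using left_less site wa wj wc by (simp add: boundary_crossings_fun_upd arc_crossing_nonpos)
  moreover have "(int a + 1 + kb) div int n = (int j + kb) div int n + (if j = 0 then 1 else 0)"
    using left_succ site by auto
  ultimately show ?thesis
    using even_arc_crossing_pair[OF site, of kb] arc_crossing_left_unit unfolding c_def by auto
qed

lemma defect_left_parity:
  assumes wa: "w a = Some ka" and wj: "w j = None"
  shows "even (boundary_crossings n (w(a := Some 1, j := Some (-1), node n (int a + ka) := None))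
               - boundary_crossings n w + - ((int j - 1 + ka) div int n))"
proof -
  define c where "c = node n (int a + ka)"
  have wc: "w c = Some (- ka)" and ka: "ka \<noteq> 0" "\<bar>ka\<bar> < int n"
    using paired[OF left_less wa] unfolding c_def by auto
  have "c < n" "a \<noteq> j" "c \<noteq> a" "c \<noteq> j"
    using node_less[of n] site left_neq_site[OF left_less wa] wj wc node_add_neq[OF left_less ka]
    unfolding c_def by auto
  then have "boundary_crossings n (w(a := Some 1, j := Some (-1), c := None)) - boundary_crossings n w
      = arc_crossing n a (Some 1) - (arc_crossing n a (Some ka) + arc_crossing n c (Some (- ka)))"
    using left_less site wa wj wc by (simp add: boundary_crossings_fun_upd arc_crossing_nonpos)
  moreover have "(int j - 1 + ka) div int n = (int a + ka) div int n - (if j = 0 then 1 else 0)"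
  proof -
    have "int j - 1 + ka = (int a + ka) + (if j = 0 then -1 else 0) * int n"
      using left_succ by (auto split: if_splits)
    then show ?thesis
      using site by (simp only: div_mult_self1) simp
  qed
  ultimately show ?thesis
    using even_arc_crossing_pair[OF left_less, of ka] arc_crossing_left_unit unfolding c_def by auto
qed

lemma long_arc_to_site:
  assumes wa: "w a = Some ka" and "node n (int a + ka) = j" and "ka \<noteq> 1"
  shows "ka = 1 - int n"
proof -
  have ka: "ka \<noteq> 0" "\<bar>ka\<bar> < int n"
    using paired[OF left_less wa] by auto
  have "(int a + ka) mod int n = (int a + 1) mod int n"
    using assms(2) int_node[of n "int a + ka"] left_succ site by auto
  then have "(int a + ka - (int a + 1)) mod int n = (int a + 1 - (int a + 1)) mod int n"
    by (rule mod_diff_cong) simp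
  then have "int n dvd ka - 1"
    by (simp add: mod_eq_0_iff_dvd)
  then have "\<bar>int n\<bar> \<le> \<bar>ka - 1\<bar>"
    using assms(3) dvd_imp_le_int[of "ka - 1" "int n"] by simp
  then show ?thesis
    using ka(2) assms(3) by auto
qed

lemma loop_crossing_change:
  assumes wa: "w a = Some ka" and wj: "w j = Some kb"
    and closes: "node n (int a + ka) = j" and "ka \<noteq> 1"
  shows "boundary_crossings n (w(a := Some 1, j := Some (-1))) - boundary_crossings n w
         = (if j = 0 then 1 else -1)"
proof -
  have ka: "ka = 1 - int n"
    using long_arc_to_site[OF wa closes \<open>ka \<noteq> 1\<close>] .
  have kb: "kb = int n - 1"
    using paired[OF left_less wa] wj closes ka by simp
  have "(int j + (int n - 1)) div int n = (if j = 0 then 0 else 1)"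
  proof (cases "j = 0")
    case False
    have "int j + (int n - 1) = (int j - 1) + 1 * int n"
      by simp
    then show ?thesis
      using site False by (simp only: div_mult_self1) simp
  qed (use site in simp)
  moreover have "0 < kb"
    using kb ka paired[OF left_less wa] site by linarith
  ultimately have "arc_crossing n j (Some kb) = (if j = 0 then 0 else 1)"
    using kb by (simp add: arc_crossing_pos)
  moreover have "arc_crossing n a (Some ka) = 0"
    using ka site by (simp add: arc_crossing_nonpos)
  ultimately show ?thesis
    using left_less site left_neq_site[OF site wj] wa wj arc_crossing_left_unit
    by (simp add: boundary_crossings_fun_upd arc_crossing_nonpos)
qed

lemma reconnect_nodes_distinct:
  assumes wa: "w a = Some ka" and wj: "w j = Some kb" and "node n (int a + ka) \<noteq> j"
  shows "distinct [a, j, node n (int a + ka), node n (int j + kb)]"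
proof -
  define c e where "c = node n (int a + ka)" and "e = node n (int j + kb)"
  have wc: "w c = Some (- ka)" and ka: "ka \<noteq> 0" "\<bar>ka\<bar> < int n"
    using paired[OF left_less wa] unfolding c_def by auto
  have we: "w e = Some (- kb)" and kb: "kb \<noteq> 0" "\<bar>kb\<bar> < int n"
    using paired[OF site wj] unfolding e_def by auto
  have "e \<noteq> a"
  proof
    assume "e = a"
    then have "ka = - kb"
      using wa we by simp
    have "int a = (int j + kb) mod int n"
      using \<open>e = a\<close> int_node[of n "int j + kb"] site unfolding e_def by simp
    then have "int (node n (int a + ka)) = ((int j + kb) mod int n - kb) mod int n"
      using \<open>ka = - kb\<close> int_node[of n] site by simp
    also have "\<dots> = int j"
      using site by (simp add: mod_diff_left_eq)
    finally show False
      using assms(3) by simp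
  qed
  moreover have "c \<noteq> e"
  proof
    assume "c = e"
    then have "ka = kb"
      using wc we by simp
    then have "(int a + ka) mod int n = (int j + ka) mod int n"
      using \<open>c = e\<close> int_node[of n "int a + ka"] int_node[of n "int j + kb"] site
      unfolding c_def e_def by auto
    then have "(int a + ka - ka) mod int n = (int j + ka - ka) mod int n"
      by (rule mod_diff_cong) simp
    then show False
      using left_less site left_neq_site[OF site wj] by simp
  qed
  ultimately show ?thesis
    using left_neq_site[OF site wj] node_add_neq[OF left_less ka] node_add_neq[OF site kb] assms(3)
    unfolding c_def e_def by auto
qed

lemma reconnect_parity:
  assumes wa: "w a = Some ka" and wj: "w j = Some kb" and opens: "node n (int a + ka) \<noteq> j"
  shows "even (boundary_crossings n (w(a := Some 1, j := Some (-1),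
                  node n (int a + ka) := Some (1 + kb - ka),
                  node n (int a + 1 + kb) := Some (- (1 + kb - ka))))
               - boundary_crossings n w)"
proof -
  define c e m where "c = node n (int a + ka)" and "e = node n (int j + kb)" and "m = 1 + kb - ka"
  have wc: "w c = Some (- ka)"
    using paired[OF left_less wa] unfolding c_def by auto
  have we: "w e = Some (- kb)"
    using paired[OF site wj] unfolding e_def by auto
  have "c < n" "e < n"
    using node_less site unfolding c_def e_def by auto
  moreover have "distinct [a, j, c, e]"
    using reconnect_nodes_distinct[OF wa wj opens] unfolding c_def e_def .
  ultimately have "boundary_crossings n (w(a := Some 1, j := Some (-1), c := Some m, e := Some (- m)))
        - boundary_crossings n w
      = arc_crossing n a (Some 1) - (arc_crossing n a (Some ka) + arc_crossing n c (Some (- ka)))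
        - (arc_crossing n j (Some kb) + arc_crossing n e (Some (- kb)))
        + (arc_crossing n c (Some m) + arc_crossing n e (Some (- m)))"
    using left_less site wa wj wc we by (simp add: boundary_crossings_fun_upd arc_crossing_nonpos)
  moreover have ec: "e = node n (int c + m)"
    using node_left_succ_add[of kb] site
    unfolding c_def e_def m_def node_def by (simp add: mod_add_left_eq add.assoc)
  moreover have "(int c + m) div int n = (int a + 1 + kb) div int n - (int a + ka) div int n"
    using div_add_eq_div_plus_mod_add_div[of "int n" "int a + ka" m] int_node[of n "int a + ka"] site
    unfolding c_def m_def by (simp add: add.assoc)
  moreover have "(int a + 1 + kb) div int n = (int j + kb) div int n + (if j = 0 then 1 else 0)"
    using left_succ site by auto
  ultimately show ?thesis
    using even_arc_crossing_pair[OF left_less, of ka] even_arc_crossing_pair[OF site, of kb]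
      even_arc_crossing_pair[OF \<open>c < n\<close>, of m] arc_crossing_left_unit
    using node_left_succ_add[of kb] unfolding c_def e_def m_def by auto
qed

lemma gen_act_crossing_sign_loop:
  assumes wa: "w a = Some ka" and wj: "w j = Some kb" and closes: "node n (int a + ka) = j"
  shows "fst (gen_act n beta (- z) j w) * crossing_sign n w
         = crossing_sign n (snd (gen_act n beta z j w)) * fst (gen_act n beta z j w)"
proof (cases "ka = 1")
  case True
  then have "w(a := Some 1, j := Some (-1)) = w"
    using paired[OF left_less wa] wa wj closes by auto
  then show ?thesis
    using closes True by (simp add: gen_act_at_site wa wj)
next
  case False
  have loop: "gen_act n beta z' j w = (z' + inverse z', w(a := Some 1, j := Some (-1)))" for z'
    by (simp add: gen_act_at_site wa wj closes False)
  have "crossing_sign n (snd (gen_act n beta z j w)) = - crossing_sign n w"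
    using loop_crossing_change[OF wa wj closes False]
    by (intro crossing_sign_odd_change) (simp add: loop)
  moreover have "fst (gen_act n beta (- z) j w) = - fst (gen_act n beta z j w)"
    by (simp only: loop fst_conv inverse_minus_eq minus_add_distrib)
  ultimately show ?thesis
    by (metis mult.commute mult_minus_left mult_minus_right)
qed

lemma gen_act_crossing_sign:
  "fst (gen_act n beta (- z) j w) * crossing_sign n w
   = crossing_sign n (snd (gen_act n beta z j w)) * fst (gen_act n beta z j w)"
proof (cases "w a")
  case wa: None
  show ?thesis
  proof (cases "w j")
    case None
    with wa show ?thesis
      by (simp add: gen_act_at_site)
  next
    case (Some kb)
    show ?thesis
      using crossing_sign_transfer[OF defect_right_parity[OF wa Some]]
      by (simp add: gen_act_at_site wa Some Let_def power_int_minus_left)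
  qed
next
  case wa: (Some ka)
  show ?thesis
  proof (cases "w j")
    case None
    show ?thesis
      using crossing_sign_transfer[OF defect_left_parity[OF wa None]]
      by (simp add: gen_act_at_site wa None Let_def power_int_minus_left)
  next
    case wj: (Some kb)
    show ?thesis
    proof (cases "node n (int a + ka) = j")
      case True
      then show ?thesis
        using gen_act_crossing_sign_loop[OF wa wj] by blast
    next
      case False
      have "crossing_sign n (snd (gen_act n beta z j w)) = crossing_sign n w"
        using reconnect_parity[OF wa wj False]
        by (intro crossing_sign_even_change) (simp add: gen_act_at_site wa wj False Let_def)
      then show ?thesis
        by (simp add: gen_act_at_site wa wj False Let_def)
    qed
  qed
qed

end

definition sign_twist :: "nat \<Rightarrow> (linkstate \<Rightarrow> complex) \<Rightarrow> linkstate \<Rightarrow> complex" where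
  "sign_twist n v = (\<lambda>w. crossing_sign n w * v w)"

lemma sign_twist_sign_twist [simp]: "sign_twist n (sign_twist n v) = v"
  by (simp add: sign_twist_def mult.assoc[symmetric] crossing_sign_square)

lemma sign_twist_std_module: "v \<in> std_module n d \<Longrightarrow> sign_twist n v \<in> std_module n d"
  by (simp add: sign_twist_def std_module_def)

lemma bij_betw_sign_twist: "bij_betw (sign_twist n) (std_module n d) (std_module n d)"
  by (rule bij_betw_byWitness[where f' = "sign_twist n"]) (auto simp: sign_twist_std_module)

lemma sign_twist_linear:
  "sign_twist n (\<lambda>w. s * u w + t * v w) = (\<lambda>w. s * sign_twist n u w + t * sign_twist n v w)"
  by (simp add: sign_twist_def algebra_simps)

lemma snd_gen_act_parameter_independent: "snd (gen_act n beta z' j w) = snd (gen_act n beta z j w)"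
  unfolding gen_act_def Let_def by (simp split: option.split)

lemma sign_twist_std_act:
  assumes "j < n"
  shows "sign_twist n (std_act n d beta z j v) = std_act n d beta (- z) j (sign_twist n v)"
proof (rule ext)
  fix w'
  have "crossing_sign n w' * (if snd (gen_act n beta z j w) = w' then fst (gen_act n beta z j w) * v w else 0)
      = (if snd (gen_act n beta (- z) j w) = w'
         then fst (gen_act n beta (- z) j w) * (crossing_sign n w * v w) else 0)"
    if "w \<in> LS n d" for w
  proof -
    have link: "is_link_state n d w"
      using that by (simp add: LS_def)
    show ?thesis
      using gen_act_crossing_sign[OF is_link_state_paired[OF link] assms refl, where beta = beta and z = z]
        snd_gen_act_parameter_independent[of n beta "- z" j w z]
      by (auto simp: mult.assoc[symmetric])
  qed
  then show "sign_twist n (std_act n d beta z j v) w' = std_act n d beta (- z) j (sign_twist n v) w'"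
    unfolding sign_twist_def std_act_def by (simp add: sum_distrib_left cong: sum.cong)
qed

theorem lemma2p4:
  fixes n d :: nat and q z :: complex
  assumes "1 \<le> n" and "q \<noteq> 0" and "d \<le> n" and "d mod 2 = n mod 2" and "z \<noteq> 0"
  shows "std_modules_iso n d (- q - inverse q) z (- z)"
  unfolding std_modules_iso_def
  using bij_betw_sign_twist sign_twist_linear sign_twist_std_act by blast

end
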